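(* Let $(D,\prec,\succ,\alpha)$ be a Hom-dendriform algebra and $T:D\to D$ a homomorphic averaging operator. Define on $D$: $\prec_\perp=\prec$, $\succ_\perp=\succ$, $x\prec^T_\vdash y=Tx\prec y$, $x\prec^T_\dashv y=x\prec Ty$, $x\succ^T_\vdash y=Tx\succ y$, $x\succ^T_\dashv y=x\succ Ty$ for $x,y\in D$. Then $(D,\prec_\perp,\succ_\perp,\prec^T_\vdash,\prec^T_\dashv,\succ^T_\vdash,\succ^T_\dashv,\alpha)$ is a Hom-six-dendriform algebra.
   Context: All vector spaces are over a field of characteristic zero. A Hom-dendriform algebra is $(D,\prec,\succ,\alpha)$ with $\prec,\succ$ bilinear and $\alpha$ linear such that for all $x,y,z$: $\alpha(x)\prec(y\prec z+y\succ z)=(x\prec y)\prec\alpha(z)$; $\alpha(x)\succ(y\prec z)=(x\succ y)\prec\alpha(z)$; $\alpha(x)\succ(y\succ z)=(x\prec y+x\succ y)\succ\alpha(z)$. A homomorphic averaging operator on $(D,\prec,\succ,\alpha)$ is a linear map $T:D\to D$ such that for all $x,y\in D$: $Tx\prec Ty=T(Tx\prec y)=T(x\prec Ty)$, $Tx\succ Ty=T(Tx\succ y)=T(x\succ Ty)$, $T\circ\alpha=\alpha\circ T$, and $T(x\prec y)=Tx\prec Ty$, $T(x\succ y)=Tx\succ Ty$. A Hom-quadri-dendriform algebra is $(E,\prec_\vdash,\prec_\dashv,\succ_\vdash,\succ_\dashv,\gamma)$ with four bilinear operations and $\gamma$ linear such that for all $x,y,z$: (Q1) $(x\prec_\vdash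 y)\prec_\vdash\gamma(z)=(x\prec_\dashv y)\prec_\vdash\gamma(z)=\gamma(x)\prec_\vdash(y\prec_\vdash z+y\succ_\vdash z)$; (Q2) $(x\succ_\vdash y)\prec_\vdash\gamma(z)=(x\succ_\dashv y)\prec_\vdash\gamma(z)=\gamma(x)\succ_\vdash(y\prec_\vdash z)$; (Q3) $\gamma(x)\succ_\vdash(y\succ_\vdash z)=(x\prec_\vdash y+x\succ_\vdash y)\succ_\vdash\gamma(z)=(x\prec_\dashv y+x\succ_\dashv y)\succ_\vdash\gamma(z)$; (Q4) $\gamma(x)\succ_\vdash(y\succ_\vdash z)=(x\prec_\dashv y+x\succ_\vdash y)\succ_\vdash\gamma(z)=(x\prec_\vdash y+x\succ_\dashv y)\succ_\vdash\gamma(z)$; (Q5) $(x\prec_\vdash y)\prec_\dashv\gamma(z)=\gamma(x)\prec_\vdash(y\prec_\dashv z+y\succ_\dashv z)$; (Q6) $(x\succ_\vdash y)\prec_\dashv\gamma(z)=\gamma(x)\succ_\vdash(y\prec_\dashv z)$; (Q7) $\gamma(x)\succ_\vdash(y\succ_\dashv z)=(x\prec_\vdash y+x\succ_\vdash y)\succ_\dashv\gamma(z)$; (Q8) $(x\prec_\dashv y)\prec_\dashv\gamma(z)=\gamma(x)\prec_\dashv(y\prec_\vdash z+y\succ_\vdash z)=\gamma(x)\prec_\dashv(y\prec_\dashv z+y\succ_\dashv z)$; (Q9) $(x\prec_\dashv y)\prec_\dashv\gamma(z)=\gamma(x)\prec_\dashv(y\prec_\vdash z+y\succ_\dashv z)=\gamma(x)\prec_\dashv(y\prec_\dashv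 z+y\succ_\vdash z)$; (Q10) $(x\succ_\dashv y)\prec_\dashv\gamma(z)=\gamma(x)\succ_\dashv(y\prec_\vdash z)=\gamma(x)\succ_\dashv(y\prec_\dashv z)$; (Q11) $\gamma(x)\succ_\dashv(y\succ_\vdash z)=\gamma(x)\succ_\dashv(y\succ_\dashv z)=(x\prec_\dashv y+x\succ_\dashv y)\succ_\dashv\gamma(z)$. A Hom-six-dendriform algebra is $(E,\prec_\perp,\succ_\perp,\prec_\vdash,\prec_\dashv,\succ_\vdash,\succ_\dashv,\gamma)$ such that $(E,\prec_\perp,\succ_\perp,\gamma)$ is Hom-dendriform, $(E,\prec_\vdash,\prec_\dashv,\succ_\vdash,\succ_\dashv,\gamma)$ is Hom-quadri-dendriform, and for all $x,y,z$: (S1) $(x\prec_\vdash y)\prec_\perp\gamma(z)=\gamma(x)\prec_\vdash(y\prec_\perp z+y\succ_\perp z)$; (S2) $(x\succ_\vdash y)\prec_\perp\gamma(z)=\gamma(x)\succ_\vdash(y\prec_\perp z)$; (S3) $\gamma(x)\succ_\vdash(y\succ_\perp z)=(x\prec_\vdash y+x\succ_\vdash y)\succ_\perp\gamma(z)$; (S4) $(x\prec_\dashv y)\prec_\perp\gamma(z)=\gamma(x)\prec_\perp(y\prec_\vdash z+y\succ_\vdash z)$; (S5) $(x\succ_\dashv y)\prec_\perp\gamma(z)=\gamma(x)\succ_\perp(y\prec_\vdash z)$; (S6) $\gamma(x)\succ_\perp(y\succ_\vdash z)=(x\prec_\dashv y+x\succ_\dashv y)\succ_\perp\gamma(z)$;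 (S7) $(x\prec_\perp y)\prec_\dashv\gamma(z)=\gamma(x)\prec_\perp(y\prec_\dashv z+y\succ_\dashv z)$; (S8) $(x\succ_\perp y)\prec_\dashv\gamma(z)=\gamma(x)\succ_\perp(y\prec_\dashv z)$; (S9) $\gamma(x)\succ_\perp(y\succ_\dashv z)=(x\prec_\perp y+x\succ_\perp y)\succ_\dashv\gamma(z)$; (S10) $(x\prec_\perp y)\prec_\vdash\gamma(z)=(x\prec_\vdash y)\prec_\vdash\gamma(z)=(x\prec_\dashv y)\prec_\vdash\gamma(z)$; (S11) $(x\succ_\perp y)\prec_\vdash\gamma(z)=(x\succ_\vdash y)\prec_\vdash\gamma(z)=(x\succ_\dashv y)\prec_\vdash\gamma(z)$; (S12) $(x\prec_\perp y)\succ_\vdash\gamma(z)=(x\prec_\vdash y)\succ_\vdash\gamma(z)=(x\prec_\dashv y)\succ_\vdash\gamma(z)$; (S13) $(x\succ_\perp y)\succ_\vdash\gamma(z)=(x\succ_\vdash y)\succ_\vdash\gamma(z)=(x\succ_\dashv y)\succ_\vdash\gamma(z)$; (S14) $\gamma(x)\prec_\dashv(y\prec_\perp z)=\gamma(x)\prec_\dashv(y\prec_\vdash z)=\gamma(x)\prec_\dashv(y\prec_\dashv z)$; (S15) $\gamma(x)\succ_\dashv(y\prec_\perp z)=\gamma(x)\succ_\dashv(y\prec_\vdash z)=\gamma(x)\succ_\dashv(y\prec_\dashv z)$; (S16) $\gamma(x)\succ_\dashv(y\succ_\perp z)=\gamma(x)\succ_\dashv(y\succ_\vdash z)=\gamma(x)\succ_\dashv(y\succ_\dashv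 z)$; (S17) $\gamma(x)\prec_\dashv(y\succ_\perp z)=\gamma(x)\prec_\dashv(y\succ_\vdash z)=\gamma(x)\prec_\dashv(y\succ_\dashv z)$. *)

theory Defs
  imports Main HOL.Vector_Spaces
begin

definition bilinear_op :: "('k::field \<Rightarrow> 'v::ab_group_add \<Rightarrow> 'v) \<Rightarrow> ('v \<Rightarrow> 'v \<Rightarrow> 'v) \<Rightarrow> bool" where
  "bilinear_op sc m \<longleftrightarrow> (\<forall>y. Vector_Spaces.linear sc sc (\<lambda>x. m x y)) \<and> (\<forall>x. Vector_Spaces.linear sc sc (\<lambda>y. m x y))"

definition hom_dendriform ::
  "('k::field \<Rightarrow> 'v::ab_group_add \<Rightarrow> 'v) \<Rightarrow> ('v \<Rightarrow> 'v \<Rightarrow> 'v) \<Rightarrow> ('v \<Rightarrow> 'v \<Rightarrow> 'v) \<Rightarrow> ('v \<Rightarrow> 'v) \<Rightarrow> bool" where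
  "hom_dendriform sc l r a \<longleftrightarrow> vector_space sc \<and> bilinear_op sc l \<and> bilinear_op sc r \<and> Vector_Spaces.linear sc sc a \<and>
    (\<forall>x y z. l (a x) (l y z + r y z) = l (l x y) (a z)) \<and>
    (\<forall>x y z. r (a x) (l y z) = l (r x y) (a z)) \<and>
    (\<forall>x y z. r (a x) (r y z) = r (l x y + r x y) (a z))"

definition hom_avg_operator ::
  "('k::field \<Rightarrow> 'v::ab_group_add \<Rightarrow> 'v) \<Rightarrow> ('v \<Rightarrow> 'v \<Rightarrow> 'v) \<Rightarrow> ('v \<Rightarrow> 'v \<Rightarrow> 'v) \<Rightarrow> ('v \<Rightarrow> 'v) \<Rightarrow> ('v \<Rightarrow> 'v) \<Rightarrow> bool" where
  "hom_avg_operator sc l r a T \<longleftrightarrow> Vector_Spaces.linear sc sc T \<and>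
    (\<forall>x y. l (T x) (T y) = T (l (T x) y) \<and> T (l (T x) y) = T (l x (T y))) \<and>
    (\<forall>x y. r (T x) (T y) = T (r (T x) y) \<and> T (r (T x) y) = T (r x (T y))) \<and>
    T \<circ> a = a \<circ> T \<and>
    (\<forall>x y. T (l x y) = l (T x) (T y)) \<and>
    (\<forall>x y. T (r x y) = r (T x) (T y))"

text \<open>Arguments: lv = prec_vdash, ld = prec_dashv, rv = succ_vdash, rd = succ_dashv, g = gamma.\<close>
definition hom_quadri_dendriform ::
  "('k::field \<Rightarrow> 'v::ab_group_add \<Rightarrow> 'v) \<Rightarrow> ('v \<Rightarrow> 'v \<Rightarrow> 'v) \<Rightarrow> ('v \<Rightarrow> 'v \<Rightarrow> 'v) \<Rightarrow> ('v \<Rightarrow> 'v \<Rightarrow> 'v) \<Rightarrow> ('v \<Rightarrow> 'v \<Rightarrow> 'v) \<Rightarrow> ('v \<Rightarrow> 'v) \<Rightarrow> bool" where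
  "hom_quadri_dendriform sc lv ld rv rd g \<longleftrightarrow> vector_space sc \<and>
    bilinear_op sc lv \<and> bilinear_op sc ld \<and> bilinear_op sc rv \<and> bilinear_op sc rd \<and> Vector_Spaces.linear sc sc g \<and>
    (\<forall>x y z.
      \<comment> \<open>Q1\<close>
      lv (lv x y) (g z) = lv (ld x y) (g z) \<and> lv (ld x y) (g z) = lv (g x) (lv y z + rv y z) \<and>
      \<comment> \<open>Q2\<close>
      lv (rv x y) (g z) = lv (rd x y) (g z) \<and> lv (rd x y) (g z) = rv (g x) (lv y z) \<and>
      \<comment> \<open>Q3\<close>
      rv (g x) (rv y z) = rv (lv x y + rv x y) (g z) \<and> rv (lv x y + rv x y) (g z) = rv (ld x y + rd x y) (g z) \<and>
      \<comment> \<open>Q4\<close>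
      rv (g x) (rv y z) = rv (ld x y + rv x y) (g z) \<and> rv (ld x y + rv x y) (g z) = rv (lv x y + rd x y) (g z) \<and>
      \<comment> \<open>Q5\<close>
      ld (lv x y) (g z) = lv (g x) (ld y z + rd y z) \<and>
      \<comment> \<open>Q6\<close>
      ld (rv x y) (g z) = rv (g x) (ld y z) \<and>
      \<comment> \<open>Q7\<close>
      rv (g x) (rd y z) = rd (lv x y + rv x y) (g z) \<and>
      \<comment> \<open>Q8\<close>
      ld (ld x y) (g z) = ld (g x) (lv y z + rv y z) \<and> ld (g x) (lv y z + rv y z) = ld (g x) (ld y z + rd y z) \<and>
      \<comment> \<open>Q9\<close>
      ld (ld x y) (g z) = ld (g x) (lv y z + rd y z) \<and> ld (g x) (lv y z + rd y z) = ld (g x) (ld y z + rv y z) \<and>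
      \<comment> \<open>Q10\<close>
      ld (rd x y) (g z) = rd (g x) (lv y z) \<and> rd (g x) (lv y z) = rd (g x) (ld y z) \<and>
      \<comment> \<open>Q11\<close>
      rd (g x) (rv y z) = rd (g x) (rd y z) \<and> rd (g x) (rd y z) = rd (ld x y + rd x y) (g z))"

text \<open>Arguments: lp = prec_perp, rp = succ_perp, then lv ld rv rd g as above.\<close>
definition hom_six_dendriform ::
  "('k::field \<Rightarrow> 'v::ab_group_add \<Rightarrow> 'v) \<Rightarrow> ('v \<Rightarrow> 'v \<Rightarrow> 'v) \<Rightarrow> ('v \<Rightarrow> 'v \<Rightarrow> 'v) \<Rightarrow> ('v \<Rightarrow> 'v \<Rightarrow> 'v) \<Rightarrow> ('v \<Rightarrow> 'v \<Rightarrow> 'v) \<Rightarrow> ('v \<Rightarrow> 'v \<Rightarrow> 'v) \<Rightarrow> ('v \<Rightarrow> 'v \<Rightarrow> 'v) \<Rightarrow> ('v \<Rightarrow> 'v) \<Rightarrow> bool" where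
  "hom_six_dendriform sc lp rp lv ld rv rd g \<longleftrightarrow>
    hom_dendriform sc lp rp g \<and> hom_quadri_dendriform sc lv ld rv rd g \<and>
    (\<forall>x y z.
      \<comment> \<open>S1\<close> lp (lv x y) (g z) = lv (g x) (lp y z + rp y z) \<and>
      \<comment> \<open>S2\<close> lp (rv x y) (g z) = rv (g x) (lp y z) \<and>
      \<comment> \<open>S3\<close> rv (g x) (rp y z) = rp (lv x y + rv x y) (g z) \<and>
      \<comment> \<open>S4\<close> lp (ld x y) (g z) = lp (g x) (lv y z + rv y z) \<and>
      \<comment> \<open>S5\<close> lp (rd x y) (g z) = rp (g x) (lv y z) \<and>
      \<comment> \<open>S6\<close> rp (g x) (rv y z) = rp (ld x y + rd x y) (g z) \<and>
      \<comment> \<open>S7\<close> ld (lp x y) (g z) = lp (g x) (ld y z + rd y z) \<and>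
      \<comment> \<open>S8\<close> ld (rp x y) (g z) = rp (g x) (ld y z) \<and>
      \<comment> \<open>S9\<close> rp (g x) (rd y z) = rd (lp x y + rp x y) (g z) \<and>
      \<comment> \<open>S10\<close> lv (lp x y) (g z) = lv (lv x y) (g z) \<and> lv (lv x y) (g z) = lv (ld x y) (g z) \<and>
      \<comment> \<open>S11\<close> lv (rp x y) (g z) = lv (rv x y) (g z) \<and> lv (rv x y) (g z) = lv (rd x y) (g z) \<and>
      \<comment> \<open>S12\<close> rv (lp x y) (g z) = rv (lv x y) (g z) \<and> rv (lv x y) (g z) = rv (ld x y) (g z) \<and>
      \<comment> \<open>S13\<close> rv (rp x y) (g z) = rv (rv x y) (g z) \<and> rv (rv x y) (g z) = rv (rd x y) (g z) \<and>
      \<comment> \<open>S14\<close> ld (g x) (lp y z) = ld (g x) (lv y z) \<and> ld (g x) (lv y z) = ld (g x) (ld y z) \<and>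
      \<comment> \<open>S15\<close> rd (g x) (lp y z) = rd (g x) (lv y z) \<and> rd (g x) (lv y z) = rd (g x) (ld y z) \<and>
      \<comment> \<open>S16\<close> rd (g x) (rp y z) = rd (g x) (rv y z) \<and> rd (g x) (rv y z) = rd (g x) (rd y z) \<and>
      \<comment> \<open>S17\<close> ld (g x) (rp y z) = ld (g x) (rv y z) \<and> ld (g x) (rv y z) = ld (g x) (rd y z))"

end

theory Submission
  imports Defs
begin

text \<open>A homomorphic averaging operator T pushes through every product, and a product of two
  elements of the image of T does not change when one of the factors is replaced by its image
  under T. Hence, after moving T inside, each axiom of the six-dendriform structure becomes a
  Hom-dendriform axiom evaluated at suitable images under T.\<close>

lemma bilinear_op_precompose_left:
  assumes "bilinear_op sc m" and "Vector_Spaces.linear sc sc T"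
  shows "bilinear_op sc (\<lambda>x y. m (T x) y)"
proof -
  have "Vector_Spaces.linear sc sc (\<lambda>x. m (T x) y)" for y
    using Vector_Spaces.linear_compose[OF assms(2), where g="\<lambda>x. m x y"] assms(1)
    by (simp add: bilinear_op_def comp_def)
  then show ?thesis
    using assms(1) by (simp add: bilinear_op_def)
qed

lemma bilinear_op_precompose_right:
  assumes "bilinear_op sc m" and "Vector_Spaces.linear sc sc T"
  shows "bilinear_op sc (\<lambda>x y. m x (T y))"
proof -
  have "Vector_Spaces.linear sc sc (\<lambda>y. m x (T y))" for x
    using Vector_Spaces.linear_compose[OF assms(2), where g="\<lambda>y. m x y"] assms(1)
    by (simp add: bilinear_op_def comp_def)
  then show ?thesis
    using assms(1) by (simp add: bilinear_op_def)
qed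

locale homomorphic_averaging =
  fixes sc :: "'k::field \<Rightarrow> 'v::ab_group_add \<Rightarrow> 'v"
    and l r :: "'v \<Rightarrow> 'v \<Rightarrow> 'v" and a T :: "'v \<Rightarrow> 'v"
  assumes averaging: "hom_avg_operator sc l r a T"
begin

lemma linear_T: "Vector_Spaces.linear sc sc T"
  using averaging unfolding hom_avg_operator_def by blast

lemma T_add: "T (x + y) = T x + T y"
  using linear_T unfolding Vector_Spaces.linear_iff by blast

lemma T_l: "T (l x y) = l (T x) (T y)"
  and T_r: "T (r x y) = r (T x) (T y)"
  using averaging unfolding hom_avg_operator_def by blast+

lemma T_a: "T (a x) = a (T x)"
proof -
  have "T \<circ> a = a \<circ> T"
    using averaging unfolding hom_avg_operator_def by blast
  then show ?thesis
    by (metis comp_apply)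
qed

lemma l_TT_T: "l (T (T x)) (T y) = l (T x) (T y)"
  and l_T_TT: "l (T x) (T (T y)) = l (T x) (T y)"
  and r_TT_T: "r (T (T x)) (T y) = r (T x) (T y)"
  and r_T_TT: "r (T x) (T (T y)) = r (T x) (T y)"
proof -
  have avg_l: "l (T x) (T y) = T (l (T x) y)" "T (l (T x) y) = T (l x (T y))"
    and avg_r: "r (T x) (T y) = T (r (T x) y)" "T (r (T x) y) = T (r x (T y))" for x y
    using averaging unfolding hom_avg_operator_def by blast+
  show "l (T (T x)) (T y) = l (T x) (T y)"
    using T_l[of "T x" y] avg_l(1)[of x y] by simp
  show "l (T x) (T (T y)) = l (T x) (T y)"
    using T_l[of x "T y"] avg_l[of x y] by simp
  show "r (T (T x)) (T y) = r (T x) (T y)"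
    using T_r[of "T x" y] avg_r(1)[of x y] by simp
  show "r (T x) (T (T y)) = r (T x) (T y)"
    using T_r[of x "T y"] avg_r[of x y] by simp
qed

lemmas push_T = T_add T_l T_r T_a l_TT_T l_T_TT r_TT_T r_T_TT

end

locale hom_dendriform_averaging = homomorphic_averaging +
  assumes dendriform: "hom_dendriform sc l r a"
begin

lemma vector_space_sc: "vector_space sc"
  and bilinear_l: "bilinear_op sc l"
  and bilinear_r: "bilinear_op sc r"
  and linear_a: "Vector_Spaces.linear sc sc a"
  and l_l_a: "l (l x y) (a z) = l (a x) (l y z + r y z)"
  and r_l_a: "l (r x y) (a z) = r (a x) (l y z)"
  and a_r_r: "r (a x) (r y z) = r (l x y + r x y) (a z)"
  using dendriform unfolding hom_dendriform_def by simp_all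

lemmas dendriform_rewrites = l_l_a r_l_a a_r_r

lemma bilinear_induced:
  "bilinear_op sc (\<lambda>x y. l (T x) y)" "bilinear_op sc (\<lambda>x y. l x (T y))"
  "bilinear_op sc (\<lambda>x y. r (T x) y)" "bilinear_op sc (\<lambda>x y. r x (T y))"
  using bilinear_l bilinear_r linear_T
  by (simp_all add: bilinear_op_precompose_left bilinear_op_precompose_right)

lemma hom_quadri_dendriform_induced:
  "hom_quadri_dendriform sc (\<lambda>x y. l (T x) y) (\<lambda>x y. l x (T y))
     (\<lambda>x y. r (T x) y) (\<lambda>x y. r x (T y)) a"
  unfolding hom_quadri_dendriform_def
  by (simp add: vector_space_sc bilinear_induced linear_a push_T dendriform_rewrites)

lemma hom_six_dendriform_induced:
  "hom_six_dendriform sc l r (\<lambda>x y. l (T x) y) (\<lambda>x y. l x (T y))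
     (\<lambda>x y. r (T x) y) (\<lambda>x y. r x (T y)) a"
  unfolding hom_six_dendriform_def
  by (simp add: dendriform hom_quadri_dendriform_induced push_T dendriform_rewrites)

end

theorem corollary4p9:
  fixes sc :: "'k::field_char_0 \<Rightarrow> 'v::ab_group_add \<Rightarrow> 'v"
    and l r :: "'v \<Rightarrow> 'v \<Rightarrow> 'v" and a T :: "'v \<Rightarrow> 'v"
  assumes "hom_dendriform sc l r a"
    and "hom_avg_operator sc l r a T"
  shows "hom_six_dendriform sc l r
           (\<lambda>x y. l (T x) y) (\<lambda>x y. l x (T y))
           (\<lambda>x y. r (T x) y) (\<lambda>x y. r x (T y)) a"
proof -
  interpret hom_dendriform_averaging sc l r a T
    using assms by unfold_locales
  show ?thesis
    by (rule hom_six_dendriform_induced)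
qed

end
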